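(* Let $\mathbb{S}$ be a finite state space with $|\mathbb{S}|=K$ and let ${\bm Q}$ be the $K\times K$ transition rate matrix of a stationary and ergodic (irreducible) continuous-time Markov chain on $\mathbb{S}$. Regard ${\bm Q}$ as a function of its off-diagonal entries $q_{ij}\ge 0$ ($i\neq j$), the diagonal being determined by the requirement that each row sums to zero. Let ${\bm P}({\bm Q})={\bm I}+{\bm Q}/\gamma({\bm Q})$, where $\gamma$ is a positive function of the off-diagonal entries with $\gamma({\bm Q})>\max_{k}(-{\bm Q}_{kk})$, and fix $i\neq j$ such that ${\bm P}$ is differentiable with respect to $q_{ij}$ at ${\bm Q}$. Write ${\bm P}={\bm P}({\bm Q})$, let ${\bm\pi}$ be the unique stationary distribution of the chain (so ${\bm\pi}^{\mathsf T}{\bm Q}=0$), and let ${\bm\Pi}$ be the $K\times K$ matrix each of whose rows equals ${\bm\pi}^{\mathsf T}$. Then the limit $$\lim_{t\to\infty}\sum_{l=1}^{t}{\bm P}^{t-l}\,\frac{\partial {\bm P}({\bm Q})}{\partial q_{ij}}\,{\bm P}^{l-1}$$ exists and is unique, and it equals $${\bm\Pi}\sum_{l=0}^{\infty}\frac{\partial {\bm P}({\bm Q})}{\partial q_{ij}}\,{\bm P}^{l},$$ where the series converges.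
   Context: A transition rate matrix has nonnegative off-diagonal entries and rows summing to zero; for a stationary ergodic chain on a finite state space there is a unique stationary distribution ${\bm\pi}$. The matrix ${\bm P}={\bm I}+{\bm Q}/\gamma$ is the uniformized transition probability matrix of the chain; it has the same stationary distribution as ${\bm Q}$. In the paper's construction $\gamma({\bm Q})=\max_k(-{\bm Q}_{kk})+\epsilon$ for a fixed $\epsilon>0$. Matrix derivatives are entrywise. *)

theory Defs
  imports "HOL-Analysis.Analysis"
begin

text \<open>K x K matrices over a finite index type 'n (K = CARD('n)); products are
  matrix products (**), not the componentwise product.\<close>

primrec matpow :: "real^'n^'n \<Rightarrow> nat \<Rightarrow> real^'n^'n" where
  "matpow A 0 = mat 1"
| "matpow A (Suc k) = matpow A k ** A"

definition rate_matrix :: "real^'n^'n \<Rightarrow> bool" where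
  "rate_matrix Q \<longleftrightarrow> (\<forall>a b. a \<noteq> b \<longrightarrow> Q$a$b \<ge> 0) \<and> (\<forall>a. (\<Sum>b\<in>UNIV. Q$a$b) = 0)"

definition irreducible_rate :: "real^'n^'n \<Rightarrow> bool" where
  "irreducible_rate Q \<longleftrightarrow> (\<forall>a b. (a, b) \<in> {(x, y). x \<noteq> y \<and> Q$x$y > 0}\<^sup>*)"

definition stationary_dist :: "real^'n^'n \<Rightarrow> real^'n \<Rightarrow> bool" where
  "stationary_dist Q p \<longleftrightarrow> (\<forall>k. p$k \<ge> 0) \<and> (\<Sum>k\<in>UNIV. p$k) = 1 \<and> p v* Q = 0"

definition unif :: "(real^'n^'n \<Rightarrow> real) \<Rightarrow> real^'n^'n \<Rightarrow> real^'n^'n" where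
  "unif \<gamma> Q = mat 1 + (1 / \<gamma> Q) *\<^sub>R Q"

text \<open>Q viewed as a function of its off-diagonal entries: increasing q_ij by h
  forces the diagonal entry Q_ii to decrease by h (row sum stays zero).\<close>
definition perturb :: "real^'n^'n \<Rightarrow> 'n \<Rightarrow> 'n \<Rightarrow> real \<Rightarrow> real^'n^'n" where
  "perturb Q i j h = (\<chi> a b. Q$a$b + (if a = i \<and> b = j then h else 0)
                                   - (if a = i \<and> b = i then h else 0))"

definition rows_eq :: "real^'n \<Rightarrow> real^'n^'n" where
  "rows_eq p = (\<chi> a b. p$b)"

end

theory Submission
  imports Defs
begin

(* The uniformized matrix P is stochastic with positive diagonal, and its positive entries
   connect all states; hence some power of P has only positive entries, and Dobrushin's
   contraction of column oscillations gives P^m --> Pi geometrically. Every P(Q') has unit row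
   sums, so dP has zero row sums and dP Pi = 0. Therefore dP P^l = dP (P^l - Pi) decays
   geometrically and the series converges; writing P^(t-l) = Pi + (P^(t-l) - Pi) splits the sum
   into Pi times a partial sum of that series plus a convolution of two geometrically small
   sequences, which is O(t rho^t). *)

section \<open>Matrix products and powers\<close>

lemma bounded_bilinear_matrix_mult:
  "bounded_bilinear ((**) :: real^'n^'m \<Rightarrow> real^'k^'n \<Rightarrow> real^'k^'m)"
proof -
  have "linear (\<lambda>A::real^'n^'m. A ** B)" for B :: "real^'k^'n"
    by (rule linearI)
       (vector matrix_matrix_mult_def sum.distrib[symmetric] field_simps,
        simp add: scalar_matrix_assoc)
  moreover have "linear (\<lambda>B::real^'k^'n. A ** B)" for A :: "real^'n^'m"
    by (rule linearI) (simp_all add: matrix_add_ldistrib matrix_scalar_ac flip: scalar_matrix_assoc)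
  ultimately show ?thesis
    by (simp add: bilinear_def flip: bilinear_conv_bounded_bilinear)
qed

lemma norm_matrix_le_entry_bound:
  fixes A :: "real^'n^'m"
  assumes "\<And>a b. \<bar>A$a$b\<bar> \<le> c"
  shows "norm A \<le> real CARD('m) * real CARD('n) * c"
proof -
  have "norm A \<le> (\<Sum>a\<in>UNIV. norm (A$a))"
    unfolding norm_vec_def by (rule L2_set_le_sum) simp
  also have "\<dots> \<le> (\<Sum>a\<in>UNIV. \<Sum>b\<in>UNIV. \<bar>A$a$b\<bar>)"
    by (intro sum_mono norm_le_l1_cart)
  also have "\<dots> \<le> (\<Sum>a\<in>(UNIV::'m set). \<Sum>b\<in>(UNIV::'n set). c)"
    by (intro sum_mono assms)
  finally show ?thesis by simp
qed

lemma matpow_add: "matpow A (m + n) = matpow A m ** matpow A n"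
  by (induction n) (simp_all add: matrix_mul_assoc)

lemma matpow_stationary: "p v* P = p \<Longrightarrow> p v* matpow P m = p"
  by (induction m) (simp_all flip: vector_matrix_mul_assoc)

lemma mult_rows_eq_eq_0:
  fixes D :: "real^'n^'m"
  assumes "\<And>a. (\<Sum>b\<in>UNIV. D$a$b) = 0"
  shows "D ** rows_eq p = 0"
  using assms by (simp add: vec_eq_iff matrix_matrix_mult_def rows_eq_def flip: sum_distrib_right)

section \<open>Sandwich sums under geometric convergence\<close>

lemma tendsto_of_nat_times_power_pred:
  fixes \<rho> :: real
  assumes "0 \<le> \<rho>" "\<rho> < 1"
  shows "(\<lambda>t. real t * \<rho>^(t - 1)) \<longlonglongrightarrow> 0"
proof -
  have "(\<lambda>t. \<rho>^t + real t * \<rho>^t) \<longlonglongrightarrow> 0 + 0"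
    using assms by (intro tendsto_add LIMSEQ_power_zero powser_times_n_limit_0) auto
  then have "(\<lambda>t. real (Suc t) * \<rho>^(Suc t - 1)) \<longlonglongrightarrow> 0"
    by (simp add: algebra_simps)
  then show ?thesis by (rule LIMSEQ_imp_Suc)
qed

lemma matrix_mult_geometric_bound:
  fixes D :: "real^'n^'n" and E :: "nat \<Rightarrow> real^'n^'n"
  assumes E: "\<And>m. norm (E m) \<le> C * \<rho>^m"
  obtains C' where "\<And>m. norm (D ** E m) \<le> C' * \<rho>^m"
proof -
  obtain K where K: "\<And>(A :: real^'n^'n) (B :: real^'n^'n). norm (A ** B) \<le> norm A * norm B * K" "0 < K"
    using bounded_bilinear.pos_bounded[OF bounded_bilinear_matrix_mult] by blast
  have "norm (D ** E m) \<le> (norm D * K * C) * \<rho>^m" for m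
  proof -
    have "norm (D ** E m) \<le> norm D * norm (E m) * K"
      by (rule K(1))
    also have "\<dots> \<le> norm D * (C * \<rho>^m) * K"
      using K(2) by (intro mult_right_mono mult_left_mono E) auto
    finally show ?thesis by (simp add: mult_ac)
  qed
  then show ?thesis by (rule that)
qed

lemma matrix_convolution_tendsto_zero:
  fixes E F :: "nat \<Rightarrow> real^'n^'n"
  assumes E: "\<And>m. norm (E m) \<le> C * \<rho>^m" and F: "\<And>m. norm (F m) \<le> C' * \<rho>^m"
    and "0 \<le> \<rho>" "\<rho> < 1"
  shows "(\<lambda>t. \<Sum>l=1..t. E (t - l) ** F (l - 1)) \<longlonglongrightarrow> 0"
proof -
  obtain K where K: "\<And>(A :: real^'n^'n) (B :: real^'n^'n). norm (A ** B) \<le> norm A * norm B * K" "0 < K"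
    using bounded_bilinear.pos_bounded[OF bounded_bilinear_matrix_mult] by blast
  have C_nonneg: "0 \<le> C" "0 \<le> C'"
    using order_trans[OF norm_ge_zero E[of 0]] order_trans[OF norm_ge_zero F[of 0]] by simp_all
  have term_le: "norm (E (t - l) ** F (l - 1)) \<le> C * C' * K * \<rho>^(t - 1)"
    if "l \<in> {1..t}" for t l
  proof -
    have "norm (E (t - l) ** F (l - 1)) \<le> norm (E (t - l)) * norm (F (l - 1)) * K"
      by (rule K(1))
    also have "\<dots> \<le> (C * \<rho>^(t - l)) * (C' * \<rho>^(l - 1)) * K"
      by (intro mult_right_mono mult_mono E F) (use K(2) C_nonneg assms(3) in auto)
    also have "\<dots> = C * C' * K * \<rho>^(t - 1)"
      using that by (simp add: algebra_simps flip: power_add)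
    finally show ?thesis .
  qed
  have "\<forall>\<^sub>F t in sequentially.
      norm (\<Sum>l=1..t. E (t - l) ** F (l - 1)) \<le> C * C' * K * (real t * \<rho>^(t - 1))"
  proof (intro always_eventually allI)
    fix t
    have "norm (\<Sum>l=1..t. E (t - l) ** F (l - 1)) \<le> (\<Sum>l=1..t. C * C' * K * \<rho>^(t - 1))"
      by (intro sum_norm_le term_le)
    then show "norm (\<Sum>l=1..t. E (t - l) ** F (l - 1)) \<le> C * C' * K * (real t * \<rho>^(t - 1))"
      by (simp add: mult_ac)
  qed
  moreover have "(\<lambda>t. C * C' * K * (real t * \<rho>^(t - 1))) \<longlonglongrightarrow> 0"
    using tendsto_mult_right_zero tendsto_of_nat_times_power_pred assms(3,4) by blast
  ultimately show ?thesis by (rule Lim_null_comparison)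
qed

lemma summable_mult_matpow_geometric:
  fixes P L D :: "real^'n^'n"
  assumes conv: "\<And>m. norm (matpow P m - L) \<le> C * \<rho>^m" and "0 \<le> \<rho>" "\<rho> < 1"
    and "D ** L = 0"
  shows "summable (\<lambda>l. D ** matpow P l)"
proof -
  obtain C' where C': "\<And>m. norm (D ** (matpow P m - L)) \<le> C' * \<rho>^m"
    using matrix_mult_geometric_bound[OF conv] by blast
  have "D ** matpow P l = D ** (matpow P l - L)" for l
    using \<open>D ** L = 0\<close> by (simp add: bounded_bilinear.diff_right[OF bounded_bilinear_matrix_mult])
  with C' have "norm (D ** matpow P l) \<le> C' * \<rho>^l" for l
    by simp
  moreover have "summable (\<lambda>l. C' * \<rho>^l)"
    using assms by (intro summable_mult summable_geometric) auto
  ultimately show ?thesis by (rule summable_comparison_test'[rotated])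
qed

lemma tendsto_sum_matpow_mult_matpow:
  fixes P L D :: "real^'n^'n"
  assumes conv: "\<And>m. norm (matpow P m - L) \<le> C * \<rho>^m" and "0 \<le> \<rho>" "\<rho> < 1"
    and "D ** L = 0"
  shows "(\<lambda>t. \<Sum>l=1..t. matpow P (t - l) ** D ** matpow P (l - 1))
    \<longlonglongrightarrow> L ** (\<Sum>l. D ** matpow P l)"
proof -
  define E where "E m = matpow P m - L" for m
  note mult = bounded_bilinear_matrix_mult
  obtain C' where C': "\<And>m. norm (D ** E m) \<le> C' * \<rho>^m"
    using matrix_mult_geometric_bound[OF conv] unfolding E_def by blast
  have DP: "D ** matpow P l = D ** E l" for l
    using \<open>D ** L = 0\<close> by (simp add: E_def bounded_bilinear.diff_right[OF mult])
  have "matpow P (t - l) ** D ** matpow P (l - 1)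
      = L ** (D ** matpow P (l - 1)) + E (t - l) ** (D ** E (l - 1))" for t l
    by (simp add: E_def DP bounded_bilinear.diff_left[OF mult] flip: matrix_mul_assoc)
  then have split: "(\<Sum>l=1..t. matpow P (t - l) ** D ** matpow P (l - 1))
      = L ** (\<Sum>l<t. D ** matpow P l) + (\<Sum>l=1..t. E (t - l) ** (D ** E (l - 1)))" for t
    by (simp add: sum.distrib bounded_bilinear.sum_right[OF mult] sum.atLeast1_atMost_eq)
  have "(\<lambda>t. L ** (\<Sum>l<t. D ** matpow P l)) \<longlonglongrightarrow> L ** (\<Sum>l. D ** matpow P l)"
    by (intro bounded_bilinear.tendsto[OF mult] tendsto_const summable_LIMSEQ
        summable_mult_matpow_geometric[OF assms])
  moreover have "(\<lambda>t. \<Sum>l=1..t. E (t - l) ** (D ** E (l - 1))) \<longlonglongrightarrow> 0"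
    using conv C' assms(2,3) unfolding E_def[symmetric] by (rule matrix_convolution_tendsto_zero)
  ultimately show ?thesis
    unfolding split using tendsto_add by fastforce
qed

section \<open>Geometric ergodicity of stochastic matrices\<close>

definition stochastic_matrix :: "real^'n^'n \<Rightarrow> bool" where
  "stochastic_matrix P \<longleftrightarrow> (\<forall>a b. 0 \<le> P$a$b) \<and> (\<forall>a. (\<Sum>b\<in>UNIV. P$a$b) = 1)"

lemma stochastic_matrix_mat_1: "stochastic_matrix (mat 1)"
  by (simp add: stochastic_matrix_def mat_def)

lemma stochastic_matrix_mult:
  assumes "stochastic_matrix A" "stochastic_matrix B"
  shows "stochastic_matrix (A ** B)"
proof -
  have "(\<Sum>b\<in>UNIV. (A ** B)$a$b) = (\<Sum>c\<in>UNIV. A$a$c * (\<Sum>b\<in>UNIV. B$c$b))" for a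
    unfolding matrix_matrix_mult_def by (simp add: sum_distrib_left) (rule sum.swap)
  with assms show ?thesis
    unfolding stochastic_matrix_def by (simp add: matrix_matrix_mult_def sum_nonneg)
qed

lemma stochastic_matrix_matpow: "stochastic_matrix P \<Longrightarrow> stochastic_matrix (matpow P m)"
  by (induction m) (simp_all add: stochastic_matrix_mat_1 stochastic_matrix_mult)

lemma stochastic_matrix_le_1:
  assumes "stochastic_matrix P"
  shows "P$a$b \<le> 1"
proof -
  have "P$a$b \<le> (\<Sum>b\<in>UNIV. P$a$b)"
    using assms unfolding stochastic_matrix_def by (intro member_le_sum) auto
  with assms show ?thesis by (simp add: stochastic_matrix_def)
qed

lemma stochastic_matrix_oscillation_contraction:
  fixes A :: "real^'n^'n" and x :: "'n \<Rightarrow> real"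
  assumes A: "stochastic_matrix A" and "\<And>a c. \<delta> \<le> A$a$c" "0 \<le> \<delta>"
    and osc: "\<And>c c'. x c - x c' \<le> \<theta>"
  shows "(\<Sum>c\<in>UNIV. A$a$c * x c) - (\<Sum>c\<in>UNIV. A$a'$c * x c) \<le> (1 - \<delta>) * \<theta>"
proof -
  \<comment> \<open>Removing the common mass \<delta> from every entry leaves rows w of equal total s \<le> 1 - \<delta>;
    the removed part contributes the same amount to both rows and cancels.\<close>
  define w where "w b c = A$b$c - \<delta>" for b c
  define s where "s = 1 - real CARD('n) * \<delta>"
  have w_nonneg: "0 \<le> w b c" for b c
    unfolding w_def using assms(2) by simp
  have w_sum: "(\<Sum>c\<in>UNIV. w b c) = s" for b
    using A unfolding w_def s_def stochastic_matrix_def by (simp add: sum_subtractf)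
  have shift: "(\<Sum>c\<in>UNIV. A$b$c * x c) = (\<Sum>c\<in>UNIV. w b c * x c) + \<delta> * (\<Sum>c\<in>UNIV. x c)" for b
    unfolding w_def by (simp add: algebra_simps sum.distrib sum_distrib_left sum_subtractf)
  obtain cM where "x cM = Max (range x)"
    by (metis Max_in finite_class.finite_UNIV finite_imageI UNIV_not_empty image_is_empty rangeE)
  then have cM: "x c \<le> x cM" for c by simp
  obtain cm where "x cm = Min (range x)"
    by (metis Min_in finite_class.finite_UNIV finite_imageI UNIV_not_empty image_is_empty rangeE)
  then have cm: "x cm \<le> x c" for c by simp
  have "(\<Sum>c\<in>UNIV. w a c * x c) \<le> (\<Sum>c\<in>UNIV. w a c * x cM)"
    by (intro sum_mono mult_left_mono cM w_nonneg)
  moreover have "(\<Sum>c\<in>UNIV. w a' c * x cm) \<le> (\<Sum>c\<in>UNIV. w a' c * x c)"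
    by (intro sum_mono mult_left_mono cm w_nonneg)
  ultimately have "(\<Sum>c\<in>UNIV. A$a$c * x c) - (\<Sum>c\<in>UNIV. A$a'$c * x c) \<le> s * (x cM - x cm)"
    unfolding shift by (simp add: w_sum right_diff_distrib flip: sum_distrib_right)
  also have "\<dots> \<le> (1 - \<delta>) * \<theta>"
  proof -
    have "0 \<le> s"
      using w_sum[of a] w_nonneg by (metis sum_nonneg)
    moreover have "s \<le> 1 - \<delta>"
      using \<open>0 \<le> \<delta>\<close> unfolding s_def by (simp add: mult_le_cancel_right1)
    ultimately show ?thesis
      using osc[of cM cm] cM[of cm] by (intro mult_mono) auto
  qed
  finally show ?thesis .
qed

lemma matpow_column_oscillation_le:
  fixes P :: "real^'n^'n"
  assumes P: "stochastic_matrix P" and "1 \<le> N" "0 \<le> \<delta>"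
    and \<delta>: "\<And>a b. \<delta> \<le> matpow P N $a$b"
  shows "matpow P m $a$b - matpow P m $a'$b \<le> (1 - \<delta>) ^ (m div N)"
proof (induction m arbitrary: a a' b rule: less_induct)
  case (less m)
  show ?case
  proof (cases "m < N")
    case True
    have Pm: "stochastic_matrix (matpow P m)"
      by (rule stochastic_matrix_matpow[OF P])
    then have "matpow P m $a$b \<le> 1"
      by (rule stochastic_matrix_le_1)
    moreover have "0 \<le> matpow P m $a'$b"
      using Pm by (simp add: stochastic_matrix_def)
    ultimately show ?thesis
      using True by simp
  next
    case False
    define k where "k = m - N"
    have m: "m = N + k" and "k < m"
      using False \<open>1 \<le> N\<close> by (simp_all add: k_def)
    then have "m div N = Suc (k div N)"
      using \<open>1 \<le> N\<close> by simp
    have "matpow P m $a$b - matpow P m $a'$b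
        = (\<Sum>c\<in>UNIV. matpow P N $a$c * matpow P k $c$b) - (\<Sum>c\<in>UNIV. matpow P N $a'$c * matpow P k $c$b)"
      unfolding m matpow_add by (simp add: matrix_matrix_mult_def)
    also have "\<dots> \<le> (1 - \<delta>) * (1 - \<delta>) ^ (k div N)"
      by (rule stochastic_matrix_oscillation_contraction[OF stochastic_matrix_matpow[OF P] \<delta> \<open>0 \<le> \<delta>\<close>])
         (rule less.IH[OF \<open>k < m\<close>])
    also have "\<dots> = (1 - \<delta>) ^ (m div N)"
      using \<open>m div N = Suc (k div N)\<close> by simp
    finally show ?thesis .
  qed
qed

lemma matpow_entry_dist_stationary_le:
  fixes P :: "real^'n^'n"
  assumes P: "stochastic_matrix P" and "1 \<le> N" "0 \<le> \<delta>" "\<And>a b. \<delta> \<le> matpow P N $a$b"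
    and p: "\<And>k. 0 \<le> p$k" "(\<Sum>k\<in>UNIV. p$k) = 1" "p v* P = p"
  shows "\<bar>matpow P m $a$b - p$b\<bar> \<le> (1 - \<delta>) ^ (m div N)"
proof -
  let ?A = "matpow P m" and ?r = "(1 - \<delta>) ^ (m div N)"
  have "p$b = (\<Sum>a'\<in>UNIV. p$a' * ?A$a'$b)"
    using arg_cong[OF matpow_stationary[OF p(3), of m], of "\<lambda>v. v$b"]
    by (simp add: vector_matrix_mult_def)
  then have "?A$a$b - p$b = (\<Sum>a'\<in>UNIV. p$a' * (?A$a$b - ?A$a'$b))"
    using p(2) by (simp add: right_diff_distrib sum_subtractf flip: sum_distrib_right)
  also have "\<bar>\<dots>\<bar> \<le> (\<Sum>a'\<in>UNIV. p$a' * ?r)"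
  proof (rule order_trans[OF sum_abs sum_mono])
    fix a'
    have "\<bar>?A$a$b - ?A$a'$b\<bar> \<le> ?r"
      using matpow_column_oscillation_le[OF assms(1-4), of m a b a']
        matpow_column_oscillation_le[OF assms(1-4), of m a' b a] by linarith
    then show "\<bar>p$a' * (?A$a$b - ?A$a'$b)\<bar> \<le> p$a' * ?r"
      using p(1)[of a'] by (simp add: abs_mult mult_left_mono)
  qed
  also have "\<dots> = ?r"
    using p(2) by (simp flip: sum_distrib_right)
  finally show ?thesis .
qed

lemma eventually_matpow_pos:
  fixes P :: "real^'n^'n"
  assumes P: "stochastic_matrix P" and diag: "\<And>a. 0 < P$a$a"
    and "(a, b) \<in> {(x, y). 0 < P$x$y}\<^sup>*"
  shows "eventually (\<lambda>m. 0 < matpow P m $a$b) sequentially"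
  using assms(3)
proof (induction rule: rtrancl_induct)
  have path_pos: "0 < matpow P (Suc m) $a$d" if "0 < matpow P m $a$c" "0 < P$c$d" for m c d
  proof -
    have "0 \<le> matpow P m $x$y" "0 \<le> P$x$y" for x y
      using stochastic_matrix_matpow[OF P, of m] P by (simp_all add: stochastic_matrix_def)
    then have "matpow P m $a$c * P$c$d \<le> (\<Sum>c'\<in>UNIV. matpow P m $a$c' * P$c'$d)"
      by (intro member_le_sum mult_nonneg_nonneg) auto
    moreover have "0 < matpow P m $a$c * P$c$d"
      using that by (rule mult_pos_pos)
    ultimately show ?thesis
      by (simp add: matrix_matrix_mult_def)
  qed
  {
    case base
    have "0 < matpow P m $a$a" for m
    proof (induction m)
      case (Suc m)
      show ?case by (rule path_pos[OF Suc diag])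
    qed (simp add: mat_def)
    then show ?case by simp
  next
    case (step y z)
    have "eventually (\<lambda>m. 0 < matpow P (Suc m) $a$z) sequentially"
      using step.IH by (rule eventually_mono) (use path_pos step.hyps(2) in blast)
    then show ?case by (rule eventually_sequentially_Suc[THEN iffD1])
  }
qed

lemma stochastic_matrix_primitive:
  fixes P :: "real^'n^'n"
  assumes P: "stochastic_matrix P" and diag: "\<And>a. 0 < P$a$a"
    and irred: "\<And>a b. (a, b) \<in> {(x, y). 0 < P$x$y}\<^sup>*"
  obtains N where "1 \<le> N" "\<And>a b. 0 < matpow P N $a$b"
proof -
  have "eventually (\<lambda>m. \<forall>a b. 0 < matpow P m $a$b) sequentially"
    by (intro eventually_all_finite allI eventually_matpow_pos[OF P diag irred])
  then obtain N where N: "\<And>m a b. N \<le> m \<Longrightarrow> 0 < matpow P m $a$b"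
    by (auto simp: eventually_sequentially)
  show ?thesis
  proof (rule that)
    show "0 < matpow P (Suc N) $a$b" for a b
      by (rule N) simp
  qed simp
qed

lemma power_div_le_root_power:
  fixes \<theta> :: real
  assumes "0 < \<theta>" "\<theta> \<le> 1" "1 \<le> N"
  shows "\<theta> ^ (m div N) \<le> root N \<theta> ^ m / \<theta>"
proof -
  have "0 < N" using assms(3) by simp
  then have "root N \<theta> ^ N = \<theta>" "0 < root N \<theta>" "root N \<theta> \<le> 1"
    using assms(1,2) by (simp_all add: real_root_pow_pos)
  have "\<theta> ^ (m div N) * \<theta> = root N \<theta> ^ (N * (m div N) + N)"
    by (simp add: power_add power_mult \<open>root N \<theta> ^ N = \<theta>\<close>)
  also have "\<dots> \<le> root N \<theta> ^ m"
  proof (rule power_decreasing)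
    have "N * (m div N) + m mod N = m" "m mod N < N"
      using \<open>0 < N\<close> by simp_all
    then show "m \<le> N * (m div N) + N"
      by linarith
  qed (use \<open>0 < root N \<theta>\<close> \<open>root N \<theta> \<le> 1\<close> in auto)
  finally show ?thesis
    using assms(1) by (simp add: field_simps)
qed

lemma stochastic_matrix_matpow_geometric:
  fixes P :: "real^'n^'n"
  assumes P: "stochastic_matrix P" and diag: "\<And>a. 0 < P$a$a"
    and irred: "\<And>a b. (a, b) \<in> {(x, y). 0 < P$x$y}\<^sup>*"
    and p: "\<And>k. 0 \<le> p$k" "(\<Sum>k\<in>UNIV. p$k) = 1" "p v* P = p"
  obtains C \<rho> where "0 \<le> \<rho>" "\<rho> < 1" "\<And>m. norm (matpow P m - rows_eq p) \<le> C * \<rho>^m"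
proof -
  obtain N where N: "1 \<le> N" "\<And>a b. 0 < matpow P N $a$b"
    using stochastic_matrix_primitive[OF P diag irred] by blast
  \<comment> \<open>The cap 1/2 keeps 1 - \<delta> positive, as needed for the root and the division below.\<close>
  define \<delta> where "\<delta> = min (1/2) (Min ((\<lambda>(a, b). matpow P N $a$b) ` UNIV))"
  have "0 < \<delta>"
    unfolding \<delta>_def using N(2) by (auto simp: finite_class.finite_UNIV)
  have "\<delta> \<le> 1/2" unfolding \<delta>_def by simp
  have \<delta>_le: "\<delta> \<le> matpow P N $a$b" for a b
    unfolding \<delta>_def by (rule min.coboundedI2, rule Min_le) (auto simp: finite_class.finite_UNIV)
  define \<rho> where "\<rho> = root N (1 - \<delta>)"
  have "\<bar>(matpow P m - rows_eq p) $a$b\<bar> \<le> \<rho>^m / (1 - \<delta>)" for m a b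
  proof -
    have "\<bar>matpow P m $a$b - p$b\<bar> \<le> (1 - \<delta>) ^ (m div N)"
      using \<open>0 < \<delta>\<close> by (intro matpow_entry_dist_stationary_le[OF P N(1) _ \<delta>_le p]) simp
    also have "\<dots> \<le> \<rho>^m / (1 - \<delta>)"
      unfolding \<rho>_def using \<open>0 < \<delta>\<close> \<open>\<delta> \<le> 1/2\<close> N(1) by (intro power_div_le_root_power) auto
    finally show ?thesis by (simp add: rows_eq_def)
  qed
  then have "norm (matpow P m - rows_eq p) \<le> real CARD('n) * real CARD('n) * (\<rho>^m / (1 - \<delta>))" for m
    by (rule norm_matrix_le_entry_bound)
  moreover have "0 \<le> \<rho>" "\<rho> < 1"
    unfolding \<rho>_def using \<open>0 < \<delta>\<close> \<open>\<delta> \<le> 1/2\<close> N(1) by (auto simp: real_root_lt_1_iff)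
  ultimately show ?thesis
    using that[of \<rho> "real CARD('n) * real CARD('n) / (1 - \<delta>)"] by simp
qed

section \<open>Uniformization\<close>

lemma rate_matrix_diag_nonpos:
  assumes "rate_matrix Q"
  shows "Q$a$a \<le> 0"
proof -
  have "(\<Sum>b\<in>UNIV. Q$a$b) = Q$a$a + (\<Sum>b\<in>UNIV - {a}. Q$a$b)"
    by (simp add: sum.remove)
  moreover have "0 \<le> (\<Sum>b\<in>UNIV - {a}. Q$a$b)"
    using assms by (intro sum_nonneg) (auto simp: rate_matrix_def)
  ultimately show ?thesis
    using assms by (simp add: rate_matrix_def)
qed

lemma unif_nth: "unif \<gamma> Q $a$b = (if a = b then 1 else 0) + Q$a$b / \<gamma> Q"
  by (simp add: unif_def mat_def)

lemma row_sum_unif: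
  assumes "\<And>a. (\<Sum>b\<in>UNIV. Q$a$b) = 0"
  shows "(\<Sum>b\<in>UNIV. unif \<gamma> Q $a$b) = 1"
  using assms by (simp add: unif_nth sum.distrib flip: sum_divide_distrib)

lemma stochastic_matrix_unif:
  assumes Q: "rate_matrix Q" and \<gamma>: "\<And>a. - Q$a$a < \<gamma> Q"
  shows "stochastic_matrix (unif \<gamma> Q)" and "0 < unif \<gamma> Q $a$a"
proof -
  have "0 < \<gamma> Q"
    using \<gamma>[of a] rate_matrix_diag_nonpos[OF Q, of a] by linarith
  show "0 < unif \<gamma> Q $a$a"
    using \<gamma>[of a] \<open>0 < \<gamma> Q\<close> by (simp add: unif_nth field_simps)
  have "0 \<le> unif \<gamma> Q $a$b" for a b
    using \<gamma>[of a] \<open>0 < \<gamma> Q\<close> Q by (auto simp: unif_nth field_simps rate_matrix_def)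
  with Q show "stochastic_matrix (unif \<gamma> Q)"
    by (simp add: stochastic_matrix_def rate_matrix_def row_sum_unif)
qed

lemma irreducible_unif:
  assumes "irreducible_rate Q" "0 < \<gamma> Q"
  shows "(a, b) \<in> {(x, y). 0 < unif \<gamma> Q $x$y}\<^sup>*"
proof -
  have "{(x, y). x \<noteq> y \<and> 0 < Q$x$y} \<subseteq> {(x, y). 0 < unif \<gamma> Q $x$y}"
    using assms(2) by (auto simp: unif_nth)
  then show ?thesis
    using assms(1) rtrancl_mono unfolding irreducible_rate_def by blast
qed

lemma stationary_unif:
  assumes "stationary_dist Q p"
  shows "p v* unif \<gamma> Q = p"
proof -
  have "p v* ((1 / \<gamma> Q) *\<^sub>R Q) = (1 / \<gamma> Q) *\<^sub>R (p v* Q)"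
    by (simp add: vec_eq_iff vector_matrix_mult_def sum_distrib_left mult_ac)
  with assms show ?thesis
    by (simp add: unif_def stationary_dist_def vector_matrix_mult_add_rdistrib)
qed

lemma row_sum_unif_perturb:
  assumes "rate_matrix Q"
  shows "(\<Sum>b\<in>UNIV. unif \<gamma> (perturb Q i j h) $a$b) = 1"
proof (rule row_sum_unif)
  show "(\<Sum>b\<in>UNIV. perturb Q i j h $a$b) = 0" for a
    using assms by (cases "a = i") (simp_all add: perturb_def rate_matrix_def sum.distrib sum_subtractf)
qed

lemma row_sum_vector_derivative_eq_0:
  fixes f :: "real \<Rightarrow> real^'n^'m"
  assumes "(f has_vector_derivative D) (at x within S)" "at x within S \<noteq> bot"
    and "\<And>h. (\<Sum>b\<in>UNIV. f h $a$b) = c"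
  shows "(\<Sum>b\<in>UNIV. D$a$b) = 0"
proof -
  have "bounded_linear (\<lambda>M::real^'n^'m. \<Sum>b\<in>UNIV. M$a$b)"
    by (intro bounded_linear_sum bounded_linear_compose[OF bounded_linear_vec_nth] bounded_linear_vec_nth)
  from bounded_linear.has_vector_derivative[OF this assms(1)]
  have "((\<lambda>h. c) has_vector_derivative (\<Sum>b\<in>UNIV. D$a$b)) (at x within S)"
    using assms(3) by (simp add: o_def)
  then show ?thesis
    using vector_derivative_unique_within[OF assms(2)] by (metis has_vector_derivative_const)
qed

theorem proposition1:
  fixes Q :: "real^'n^'n" and \<gamma> :: "real^'n^'n \<Rightarrow> real"
    and p :: "real^'n" and i j :: 'n and dP :: "real^'n^'n"
  assumes "rate_matrix Q" and "irreducible_rate Q"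
    and "\<gamma> Q > (MAX k\<in>UNIV. - Q$k$k)"
    and "stationary_dist Q p"
    and "i \<noteq> j"
    and "((\<lambda>h. unif \<gamma> (perturb Q i j h)) has_vector_derivative dP)
           (at 0 within {h. Q$i$j + h \<ge> 0})"
  shows "summable (\<lambda>l. dP ** matpow (unif \<gamma> Q) l)
    \<and> (\<lambda>t. \<Sum>l=1..t. matpow (unif \<gamma> Q) (t - l) ** dP ** matpow (unif \<gamma> Q) (l - 1))
        \<longlonglongrightarrow> rows_eq p ** (\<Sum>l. dP ** matpow (unif \<gamma> Q) l)"
proof -
  have \<gamma>: "- Q$a$a < \<gamma> Q" for a
    using assms(3) Max_ge[of "range (\<lambda>k. - Q$k$k)" "- Q$a$a"] by (simp add: finite_class.finite_UNIV)
  have "0 < \<gamma> Q"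
    using \<gamma>[of i] rate_matrix_diag_nonpos[OF assms(1), of i] by linarith
  have p: "\<And>k. 0 \<le> p$k" "(\<Sum>k\<in>UNIV. p$k) = 1"
    using assms(4) by (simp_all add: stationary_dist_def)
  have P: "stochastic_matrix (unif \<gamma> Q)" "0 < unif \<gamma> Q $a$a" for a
    using assms(1) \<gamma> by (rule stochastic_matrix_unif)+
  obtain C \<rho> where geometric:
    "0 \<le> \<rho>" "\<rho> < 1" "\<And>m. norm (matpow (unif \<gamma> Q) m - rows_eq p) \<le> C * \<rho>^m"
    using stochastic_matrix_matpow_geometric[OF P irreducible_unif[of Q \<gamma>, OF assms(2) \<open>0 < \<gamma> Q\<close>]
        p stationary_unif[OF assms(4)]] by blast
  have "{0..1} \<subseteq> {h. Q$i$j + h \<ge> 0}"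
    using assms(1,5) by (auto simp: rate_matrix_def)
  then have "((\<lambda>h. unif \<gamma> (perturb Q i j h)) has_vector_derivative dP) (at 0 within {0..1})"
    using has_vector_derivative_within_subset[OF assms(6)] by blast
  then have "(\<Sum>b\<in>UNIV. dP$a$b) = 0" for a
    by (rule row_sum_vector_derivative_eq_0[OF _ _ row_sum_unif_perturb[OF assms(1)]])
       (simp add: at_within_Icc_at_right)
  then have "dP ** rows_eq p = 0"
    by (rule mult_rows_eq_eq_0)
  with geometric show ?thesis
    using summable_mult_matpow_geometric tendsto_sum_matpow_mult_matpow by blast
qed

end
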